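(* Let $\Gamma$ be a distance-regular graph with diameter $D\ge 4$ and valency $k$. Assume $a_1=0$ and there exists $i$ with $2\le i\le D-2$ such that $a_i\neq 0$. Then (i) for every $\theta\in\mathbb{R}$ the pair $\theta,k$ is tight; and (ii) $\Gamma$ has no further tight pairs, i.e. if $\theta,\theta'\in\mathbb{R}$ form a tight pair then $\theta=k$ or $\theta'=k$.
   Context: $\Gamma$ is a finite connected undirected graph without loops or multiple edges, distance-regular with diameter $D$, intersection numbers $a_i,b_i,c_i$ ($c_0=0$, $b_D=0$), valency $k=b_0$, $c_i+a_i+b_i=k$. For $\theta\in\mathbb{R}$, the pseudo cosine sequence for $\theta$ is the sequence of reals $\sigma_0,\dots,\sigma_D$ with $\sigma_0=1$ and $c_i\sigma_{i-1}+a_i\sigma_i+b_i\sigma_{i+1}=\theta\sigma_i$ for $0\le i\le D-1$. Two pseudo cosine sequences $\sigma_i$, $\rho_i$ form a tight pair if $(\sigma_i\rho_i)_{i=0}^D$ is a pseudo cosine sequence; reals $\theta,\theta'$ form a tight pair if their pseudo cosine sequences do. *)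

theory Defs
  imports Main Complex_Main
begin

definition simple_graph :: "'a set \<Rightarrow> ('a \<Rightarrow> 'a \<Rightarrow> bool) \<Rightarrow> bool" where
  "simple_graph V E \<longleftrightarrow> finite V \<and> V \<noteq> {} \<and>
     (\<forall>x y. E x y \<longrightarrow> x \<in> V \<and> y \<in> V) \<and>
     (\<forall>x y. E x y \<longrightarrow> E y x) \<and> (\<forall>x. \<not> E x x)"

definition gdist :: "('a \<Rightarrow> 'a \<Rightarrow> bool) \<Rightarrow> 'a \<Rightarrow> 'a \<Rightarrow> nat" where
  "gdist E x y = (LEAST n. (E ^^ n) x y)"

definition connected_graph :: "'a set \<Rightarrow> ('a \<Rightarrow> 'a \<Rightarrow> bool) \<Rightarrow> bool" where
  "connected_graph V E \<longleftrightarrow> (\<forall>x\<in>V. \<forall>y\<in>V. \<exists>n. (E ^^ n) x y)"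

definition diameter :: "'a set \<Rightarrow> ('a \<Rightarrow> 'a \<Rightarrow> bool) \<Rightarrow> nat" where
  "diameter V E = Max {gdist E x y | x y. x \<in> V \<and> y \<in> V}"

definition distance_regular ::
  "'a set \<Rightarrow> ('a \<Rightarrow> 'a \<Rightarrow> bool) \<Rightarrow> (nat \<Rightarrow> nat) \<Rightarrow> (nat \<Rightarrow> nat) \<Rightarrow> (nat \<Rightarrow> nat) \<Rightarrow> bool" where
  "distance_regular V E a b c \<longleftrightarrow> simple_graph V E \<and> connected_graph V E \<and>
     (\<forall>x\<in>V. \<forall>y\<in>V.
        card {z\<in>V. E y z \<and> gdist E x z + 1 = gdist E x y} = c (gdist E x y) \<and>
        card {z\<in>V. E y z \<and> gdist E x z = gdist E x y} = a (gdist E x y) \<and>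
        card {z\<in>V. E y z \<and> gdist E x z = gdist E x y + 1} = b (gdist E x y))"

text \<open>Pseudo cosine sequence for theta (only indices 0..D are relevant).\<close>
definition pseudo_cosine ::
  "(nat \<Rightarrow> nat) \<Rightarrow> (nat \<Rightarrow> nat) \<Rightarrow> (nat \<Rightarrow> nat) \<Rightarrow> nat \<Rightarrow> real \<Rightarrow> (nat \<Rightarrow> real) \<Rightarrow> bool" where
  "pseudo_cosine a b c D \<theta> \<sigma> \<longleftrightarrow> \<sigma> 0 = 1 \<and>
     (\<forall>i<D. real (c i) * (if i = 0 then 0 else \<sigma> (i - 1)) + real (a i) * \<sigma> i
             + real (b i) * \<sigma> (i + 1) = \<theta> * \<sigma> i)"

definition tight_seqs ::
  "(nat \<Rightarrow> nat) \<Rightarrow> (nat \<Rightarrow> nat) \<Rightarrow> (nat \<Rightarrow> nat) \<Rightarrow> nat \<Rightarrow> (nat \<Rightarrow> real) \<Rightarrow> (nat \<Rightarrow> real) \<Rightarrow> bool" where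
  "tight_seqs a b c D \<sigma> \<rho> \<longleftrightarrow> (\<exists>\<eta>. pseudo_cosine a b c D \<eta> (\<lambda>i. \<sigma> i * \<rho> i))"

definition tight_pair ::
  "(nat \<Rightarrow> nat) \<Rightarrow> (nat \<Rightarrow> nat) \<Rightarrow> (nat \<Rightarrow> nat) \<Rightarrow> nat \<Rightarrow> real \<Rightarrow> real \<Rightarrow> bool" where
  "tight_pair a b c D \<theta> \<theta>' \<longleftrightarrow> (\<exists>\<sigma> \<rho>. pseudo_cosine a b c D \<theta> \<sigma> \<and>
       pseudo_cosine a b c D \<theta>' \<rho> \<and> tight_seqs a b c D \<sigma> \<rho>)"

end

theory Submission
  imports Defs
begin

text \<open>
  Since \<open>c\<^sub>i + a\<^sub>i + b\<^sub>i = k\<close>, the constant sequence 1 is the pseudo cosine sequence of \<open>k\<close>,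
  and multiplying by it changes nothing: every \<open>\<theta>\<close> forms a tight pair with \<open>k\<close>.

  Conversely, let \<open>\<sigma>\<close>, \<open>\<rho>\<close> be the sequences of a tight pair \<open>\<theta>, \<theta>'\<close> with product sequence
  for \<open>\<eta>\<close>. As \<open>a\<^sub>0 = a\<^sub>1 = 0\<close>, the recurrences at \<open>i = 0, 1\<close> give \<open>\<theta> = k \<sigma>\<^sub>1\<close>,
  \<open>\<theta>' = k \<rho>\<^sub>1\<close>, \<open>\<eta> = k \<sigma>\<^sub>1 \<rho>\<^sub>1\<close> and then \<open>(\<sigma>\<^sub>1\<^sup>2 - 1)(\<rho>\<^sub>1\<^sup>2 - 1) = 0\<close>, so one of \<open>\<theta>, \<theta>'\<close> is \<open>\<plusminus>k\<close>.
  It remains to see that \<open>-k\<close> only pairs with \<open>k\<close>. For \<open>\<theta> = -k\<close> we get \<open>\<eta> = -\<theta>'\<close>, and \<open>\<sigma>\<close>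
  alternates in sign up to the first \<open>i \<ge> 2\<close> with \<open>a\<^sub>i \<noteq> 0\<close>. Combining the three recurrences at
  \<open>i\<close> yields \<open>\<rho>\<^bsub>i+1\<^esub> = \<rho>\<^sub>i\<close>, and at \<open>i + 1\<close> they yield \<open>(\<theta>' - k) \<rho>\<^sub>i = 0\<close>. Finally \<open>\<rho>\<^sub>i \<noteq> 0\<close>,
  because a pseudo cosine sequence vanishing at two consecutive indices would, running the
  recurrence backwards with \<open>c\<^sub>j > 0\<close>, vanish at 0.
\<close>

lemma gdist_le: "(E ^^ n) x y \<Longrightarrow> gdist E x y \<le> n"
  unfolding gdist_def by (rule Least_le)

lemma gdist_walk:
  assumes "connected_graph V E" "x \<in> V" "y \<in> V"
  shows "(E ^^ gdist E x y) x y"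
  using assms unfolding gdist_def connected_graph_def by (metis LeastI)

lemma gdist_self [simp]: "gdist E x x = 0"
  using gdist_le[of 0 E x x] by simp

lemma gdist_eq_0D:
  assumes "connected_graph V E" "x \<in> V" "y \<in> V" "gdist E x y = 0"
  shows "x = y"
  using gdist_walk[OF assms(1-3)] assms(4) by auto

lemma gdist_adjacent_le:
  assumes "connected_graph V E" "x \<in> V" "y \<in> V" "E y z"
  shows "gdist E x z \<le> gdist E x y + 1"
  using gdist_le[OF relpowp_Suc_I[OF gdist_walk[OF assms(1-3)] assms(4)]] by simp

lemma gdist_Suc_predecessor:
  assumes "simple_graph V E" "connected_graph V E" "x \<in> V" "y \<in> V" "gdist E x y = Suc n"
  shows "\<exists>w\<in>V. E w y \<and> gdist E x w = n"
proof -
  obtain w where walk: "(E ^^ n) x w" and wy: "E w y"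
    using gdist_walk[OF assms(2-4)] assms(5) by auto
  have "w \<in> V" using assms(1) wy unfolding simple_graph_def by blast
  with walk wy gdist_le[OF walk] gdist_adjacent_le[OF assms(2,3) _ wy] assms(5)
  show ?thesis by force
qed

lemma gdist_intermediate_values:
  assumes "simple_graph V E" "connected_graph V E" "x \<in> V" "y \<in> V" "j \<le> gdist E x y"
  shows "\<exists>z\<in>V. gdist E x z = j"
  using assms(4,5)
proof (induction "gdist E x y" arbitrary: y)
  case 0
  then show ?case by auto
next
  case (Suc n)
  show ?case
  proof (cases "j = Suc n")
    case True
    with Suc.hyps(2) Suc.prems(1) show ?thesis by auto
  next
    case False
    obtain w where "w \<in> V" "gdist E x w = n"
      using gdist_Suc_predecessor[OF assms(1-3) Suc.prems(1) Suc.hyps(2)[symmetric]] by blast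
    with False Suc show ?thesis by auto
  qed
qed

lemma diameter_attained:
  assumes "simple_graph V E"
  shows "\<exists>x\<in>V. \<exists>y\<in>V. gdist E x y = diameter V E"
proof -
  have "{gdist E x y | x y. x \<in> V \<and> y \<in> V} = (\<lambda>(x, y). gdist E x y) ` (V \<times> V)"
    by auto
  moreover have "finite V" "V \<noteq> {}" using assms unfolding simple_graph_def by auto
  ultimately have "diameter V E \<in> {gdist E x y | x y. x \<in> V \<and> y \<in> V}"
    unfolding diameter_def by (intro Max_in) auto
  then show ?thesis by force
qed

context
  fixes V :: "'a set" and E :: "'a \<Rightarrow> 'a \<Rightarrow> bool" and a b c :: "nat \<Rightarrow> nat"
  assumes drg: "distance_regular V E a b c"
begin

private lemma simple: "simple_graph V E"
  and connected: "connected_graph V E"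
  and intersection_counts: "x \<in> V \<Longrightarrow> y \<in> V \<Longrightarrow>
        card {z\<in>V. E y z \<and> gdist E x z + 1 = gdist E x y} = c (gdist E x y) \<and>
        card {z\<in>V. E y z \<and> gdist E x z = gdist E x y} = a (gdist E x y) \<and>
        card {z\<in>V. E y z \<and> gdist E x z = gdist E x y + 1} = b (gdist E x y)"
  using drg unfolding distance_regular_def by auto

private lemma finite_vertices: "finite V"
  using simple unfolding simple_graph_def by blast

lemma distance_regular_degree_split:
  assumes x: "x \<in> V" and y: "y \<in> V"
  shows "card {z\<in>V. E y z} = c (gdist E x y) + a (gdist E x y) + b (gdist E x y)"
proof -
  let ?d = "gdist E x y"
  have "{z\<in>V. E y z} = {z\<in>V. E y z \<and> gdist E x z + 1 = ?d} \<union>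
      {z\<in>V. E y z \<and> gdist E x z = ?d} \<union> {z\<in>V. E y z \<and> gdist E x z = ?d + 1}"
  proof -
    have "gdist E x z \<le> ?d + 1 \<and> ?d \<le> gdist E x z + 1" if z: "z \<in> V" and yz: "E y z" for z
    proof -
      have "E z y" using simple yz unfolding simple_graph_def by blast
      with gdist_adjacent_le[OF connected x y yz] gdist_adjacent_le[OF connected x z]
      show ?thesis by simp
    qed
    then show ?thesis by force
  qed
  then have "card {z\<in>V. E y z} = card {z\<in>V. E y z \<and> gdist E x z + 1 = ?d} +
      card {z\<in>V. E y z \<and> gdist E x z = ?d} + card {z\<in>V. E y z \<and> gdist E x z = ?d + 1}"
    using finite_vertices by (simp add: card_Un_disjoint disjoint_iff)
  with intersection_counts[OF x y] show ?thesis by simp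
qed

lemma distance_regular_degree:
  assumes y: "y \<in> V"
  shows "card {z\<in>V. E y z} = b 0"
proof -
  have "gdist E y z = 1" if z: "z \<in> V" and yz: "E y z" for z
  proof -
    have "gdist E y z \<le> 1" using gdist_le[of 1 E y z] yz by (simp only: relpowp_1)
    moreover have "y \<noteq> z" using simple yz unfolding simple_graph_def by blast
    ultimately show ?thesis using gdist_eq_0D[OF connected y z] by linarith
  qed
  then have "{z\<in>V. E y z} = {z\<in>V. E y z \<and> gdist E y z = gdist E y y + 1}"
    by auto
  with intersection_counts[OF y y] show ?thesis by simp
qed

private lemma distances_attained:
  obtains x where "x \<in> V" "\<And>j. j \<le> diameter V E \<Longrightarrow> \<exists>y\<in>V. gdist E x y = j"
proof -
  obtain x y where "x \<in> V" "y \<in> V" "gdist E x y = diameter V E"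
    using diameter_attained[OF simple] by blast
  with gdist_intermediate_values[OF simple connected] that show thesis by metis
qed

lemma distance_regular_intersection_sum:
  assumes "j \<le> diameter V E"
  shows "c j + a j + b j = b 0"
proof -
  obtain x y where "x \<in> V" "y \<in> V" "gdist E x y = j"
    using distances_attained assms by metis
  then show ?thesis using distance_regular_degree_split distance_regular_degree by metis
qed

lemma distance_regular_c_pos:
  assumes "1 \<le> j" "j \<le> diameter V E"
  shows "0 < c j"
proof -
  obtain i where j: "j = Suc i" using assms(1) by (cases j) auto
  obtain x y where x: "x \<in> V" and y: "y \<in> V" and xy: "gdist E x y = Suc i"
    using distances_attained assms(2) j by metis
  obtain w where "w \<in> V" "E w y" "gdist E x w = i"
    using gdist_Suc_predecessor[OF simple connected x y xy] by blast
  then have "w \<in> {z\<in>V. E y z \<and> gdist E x z + 1 = gdist E x y}"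
    using simple xy unfolding simple_graph_def by auto
  then have "0 < card {z\<in>V. E y z \<and> gdist E x z + 1 = gdist E x y}"
    using finite_vertices by (auto simp: card_gt_0_iff)
  with intersection_counts[OF x y] xy j show ?thesis by simp
qed

lemma distance_regular_b_pos:
  assumes "j < diameter V E"
  shows "0 < b j"
proof -
  obtain x y where x: "x \<in> V" and y: "y \<in> V" and xy: "gdist E x y = Suc j"
    using distances_attained assms by (metis Suc_leI)
  obtain w where w: "w \<in> V" "E w y" "gdist E x w = j"
    using gdist_Suc_predecessor[OF simple connected x y xy] by blast
  then have "y \<in> {z\<in>V. E w z \<and> gdist E x z = gdist E x w + 1}"
    using y xy by auto
  then have "0 < card {z\<in>V. E w z \<and> gdist E x z = gdist E x w + 1}"
    using finite_vertices by (auto simp: card_gt_0_iff)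
  with intersection_counts[OF x w(1)] w show ?thesis by simp
qed

end

lemma pseudo_cosine_0: "pseudo_cosine a b c D \<theta> \<sigma> \<Longrightarrow> \<sigma> 0 = 1"
  unfolding pseudo_cosine_def by blast

lemma pseudo_cosine_rec_0:
  "pseudo_cosine a b c D \<theta> \<sigma> \<Longrightarrow> 0 < D \<Longrightarrow> real (a 0) * \<sigma> 0 + real (b 0) * \<sigma> 1 = \<theta> * \<sigma> 0"
  unfolding pseudo_cosine_def by auto

lemma pseudo_cosine_rec_Suc:
  assumes "pseudo_cosine a b c D \<theta> \<sigma>" "Suc i < D"
  shows "real (c (Suc i)) * \<sigma> i + real (a (Suc i)) * \<sigma> (Suc i) + real (b (Suc i)) * \<sigma> (Suc (Suc i))
      = \<theta> * \<sigma> (Suc i)"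
  using assms unfolding pseudo_cosine_def by (metis Suc_eq_plus1 diff_Suc_1 nat.distinct(1))

lemma tight_pair_commute:
  assumes "tight_pair a b c D \<theta> \<theta>'"
  shows "tight_pair a b c D \<theta>' \<theta>"
proof -
  obtain \<sigma> \<rho> \<eta> where "pseudo_cosine a b c D \<theta> \<sigma>" "pseudo_cosine a b c D \<theta>' \<rho>"
    and "pseudo_cosine a b c D \<eta> (\<lambda>i. \<sigma> i * \<rho> i)"
    using assms unfolding tight_pair_def tight_seqs_def by blast
  moreover have "(\<lambda>i. \<sigma> i * \<rho> i) = (\<lambda>i. \<rho> i * \<sigma> i)" by (simp add: mult.commute)
  ultimately show ?thesis unfolding tight_pair_def tight_seqs_def by auto
qed

locale intersection_array =
  fixes a b c :: "nat \<Rightarrow> nat" and D :: nat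
  assumes intersection_sum: "j \<le> D \<Longrightarrow> c j + a j + b j = b 0"
    and c_pos: "1 \<le> j \<Longrightarrow> j \<le> D \<Longrightarrow> 0 < c j"
    and b_pos: "j < D \<Longrightarrow> 0 < b j"
begin

lemma a_0 [simp]: "a 0 = 0"
  using intersection_sum[of 0] by simp

lemma intersection_sum_real: "j \<le> D \<Longrightarrow> real (c j) + real (a j) + real (b j) = real (b 0)"
  using intersection_sum by (metis of_nat_add)

fun cosine_seq :: "real \<Rightarrow> nat \<Rightarrow> real" where
  "cosine_seq \<theta> 0 = 1"
| "cosine_seq \<theta> (Suc 0) = \<theta> / real (b 0)"
| "cosine_seq \<theta> (Suc (Suc i)) =
     ((\<theta> - real (a (Suc i))) * cosine_seq \<theta> (Suc i) - real (c (Suc i)) * cosine_seq \<theta> i)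
     / real (b (Suc i))"

lemma pseudo_cosine_cosine_seq: "pseudo_cosine a b c D \<theta> (cosine_seq \<theta>)"
  unfolding pseudo_cosine_def
proof (intro conjI allI impI)
  fix i assume "i < D"
  then have "real (b i) \<noteq> 0" using b_pos by simp
  then show "real (c i) * (if i = 0 then 0 else cosine_seq \<theta> (i - 1)) + real (a i) * cosine_seq \<theta> i
      + real (b i) * cosine_seq \<theta> (i + 1) = \<theta> * cosine_seq \<theta> i"
    by (cases i) (auto simp: field_simps)
qed simp

lemma pseudo_cosine_valency: "pseudo_cosine a b c D (real (b 0)) (\<lambda>_. 1)"
  unfolding pseudo_cosine_def using intersection_sum_real by auto

lemma tight_pair_valency: "tight_pair a b c D \<theta> (real (b 0))"
  unfolding tight_pair_def tight_seqs_def
  using pseudo_cosine_cosine_seq pseudo_cosine_valency by fastforce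

lemma pseudo_cosine_1:
  assumes "pseudo_cosine a b c D \<theta> \<sigma>" "0 < D"
  shows "\<theta> = real (b 0) * \<sigma> 1"
  using pseudo_cosine_rec_0[OF assms] pseudo_cosine_0[OF assms(1)] by simp

lemma pseudo_cosine_no_consecutive_zeros:
  assumes \<rho>: "pseudo_cosine a b c D \<theta> \<rho>"
  shows "i < D \<Longrightarrow> \<rho> i = 0 \<Longrightarrow> \<rho> (Suc i) = 0 \<Longrightarrow> False"
proof (induction i)
  case 0
  then show ?case using pseudo_cosine_0[OF \<rho>] by simp
next
  case (Suc i)
  have "real (c (Suc i)) * \<rho> i = 0"
    using pseudo_cosine_rec_Suc[OF \<rho> Suc.prems(1)] Suc.prems(2,3) by simp
  moreover have "0 < c (Suc i)" using c_pos Suc.prems(1) by simp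
  ultimately show ?case using Suc by simp
qed

lemma tight_first_cosines:
  assumes a1: "a 1 = 0" and D: "1 < D"
    and \<sigma>: "pseudo_cosine a b c D \<theta> \<sigma>" and \<rho>: "pseudo_cosine a b c D \<theta>' \<rho>"
    and \<tau>: "pseudo_cosine a b c D \<eta> (\<lambda>i. \<sigma> i * \<rho> i)"
  shows "(\<sigma> 1)\<^sup>2 = 1 \<or> (\<rho> 1)\<^sup>2 = 1"
proof -
  define k c1 where "k = real (b 0)" and "c1 = real (c 1)"
  have b1: "real (b 1) = k - c1"
    using intersection_sum_real[of 1] a1 D unfolding k_def c1_def by simp
  have "0 < k" "0 < c1"
    using b_pos[of 0] c_pos[of 1] D unfolding k_def c1_def by auto
  have second: "c1 + (k - c1) * f 2 = k * f 1 * f 1" if f: "pseudo_cosine a b c D \<phi> f" for \<phi> f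
    using pseudo_cosine_rec_Suc[OF f, of 0] pseudo_cosine_1[OF f] pseudo_cosine_0[OF f] D a1 b1
    unfolding k_def c1_def by (simp add: numeral_2_eq_2)
  from second[OF \<sigma>] second[OF \<rho>] second[OF \<tau>]
  have "c1 * k * (((\<sigma> 1)\<^sup>2 - 1) * ((\<rho> 1)\<^sup>2 - 1)) = 0"
    by algebra
  with \<open>0 < k\<close> \<open>0 < c1\<close> show ?thesis by simp
qed

lemma minus_valency_cosine_alternating:
  assumes \<sigma>: "pseudo_cosine a b c D (- real (b 0)) \<sigma>"
    and i: "i \<le> D" and a_zero: "\<And>j. 0 < j \<Longrightarrow> j < i \<Longrightarrow> a j = 0"
  shows "j \<le> i \<Longrightarrow> \<sigma> j = (-1) ^ j"
proof (induction j rule: induct_nat_012)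
  case 0
  then show ?case using pseudo_cosine_0[OF \<sigma>] by simp
next
  case 1
  then have "real (b 0) * (\<sigma> 1 + 1) = 0"
    using pseudo_cosine_1[OF \<sigma>] i by (simp add: algebra_simps)
  moreover have "0 < b 0" using b_pos 1 i by simp
  ultimately show ?case by simp
next
  case (ge2 n)
  have n: "Suc n < D" using ge2.prems i by simp
  have "real (b 0) = real (c (Suc n)) + real (b (Suc n))"
    using intersection_sum_real[of "Suc n"] a_zero[of "Suc n"] ge2.prems n by simp
  then have "real (c (Suc n)) * (-1) ^ n + real (b (Suc n)) * \<sigma> (Suc (Suc n))
      = (real (c (Suc n)) + real (b (Suc n))) * (-1) ^ n"
    using pseudo_cosine_rec_Suc[OF \<sigma> n] a_zero[of "Suc n"] ge2 by (simp add: algebra_simps)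
  then have "real (b (Suc n)) * (\<sigma> (Suc (Suc n)) - (-1) ^ n) = 0"
    by (simp add: algebra_simps)
  moreover have "0 < b (Suc n)" using b_pos n by simp
  ultimately show ?case by simp
qed

lemma minus_valency_partner_plateau:
  assumes \<sigma>: "pseudo_cosine a b c D (- real (b 0)) \<sigma>" and \<rho>: "pseudo_cosine a b c D t \<rho>"
    and \<tau>: "pseudo_cosine a b c D (- t) (\<lambda>i. \<sigma> i * \<rho> i)"
    and n: "Suc n < D" and a_pos: "0 < a (Suc n)"
    and flip: "\<sigma> n = - \<sigma> (Suc n)" and nonzero: "\<sigma> (Suc n) \<noteq> 0"
  shows "\<rho> (Suc (Suc n)) = \<rho> (Suc n)"
proof -
  have k: "real (b 0) = real (c (Suc n)) + real (a (Suc n)) + real (b (Suc n))"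
    using intersection_sum_real n by simp
  \<comment> \<open>\<open>\<sigma> (Suc n)\<close> times the \<open>\<rho>\<close>-recurrence plus the product recurrence, with
    \<open>b (Suc n) * \<sigma> (Suc (Suc n))\<close> eliminated by the \<open>\<sigma>\<close>-recurrence\<close>
  from pseudo_cosine_rec_Suc[OF \<sigma> n, unfolded flip k] pseudo_cosine_rec_Suc[OF \<rho> n]
    pseudo_cosine_rec_Suc[OF \<tau> n, unfolded flip]
  have "real (a (Suc n)) * \<sigma> (Suc n) * (\<rho> (Suc n) - \<rho> (Suc (Suc n))) = 0"
    by algebra
  with a_pos nonzero show ?thesis by simp
qed

lemma minus_valency_partner_eq_valency:
  assumes \<sigma>: "pseudo_cosine a b c D (- real (b 0)) \<sigma>" and \<rho>: "pseudo_cosine a b c D t \<rho>"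
    and \<tau>: "pseudo_cosine a b c D (- t) (\<lambda>i. \<sigma> i * \<rho> i)"
    and n: "Suc (Suc n) < D" and a_pos: "0 < a (Suc n)"
    and flip: "\<sigma> n = - \<sigma> (Suc n)" and nonzero: "\<sigma> (Suc n) \<noteq> 0"
  shows "t = real (b 0)"
proof -
  let ?a = "real (a (Suc n))" and ?b = "real (b (Suc n))" and ?c = "real (c (Suc n))"
  let ?a' = "real (a (Suc (Suc n)))" and ?b' = "real (b (Suc (Suc n)))"
    and ?c' = "real (c (Suc (Suc n)))"
  have n': "Suc n < D" using n by simp
  have plateau: "\<rho> (Suc (Suc n)) = \<rho> (Suc n)"
    using minus_valency_partner_plateau[OF \<sigma> \<rho> \<tau> n' a_pos flip nonzero] .
  have k: "real (b 0) = ?c + ?a + ?b" and k': "real (b 0) = ?c' + ?a' + ?b'"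
    using intersection_sum_real n by simp_all
  \<comment> \<open>the recurrence at \<open>Suc n\<close> reads \<open>b\<^sub>i \<sigma>\<^bsub>i+1\<^esub> = -(b\<^sub>i + 2 a\<^sub>i) \<sigma>\<^sub>i\<close> for \<open>i = Suc n\<close>\<close>
  from pseudo_cosine_rec_Suc[OF \<sigma> n', unfolded flip k]
  have growth: "?b * (?c' * \<sigma> (Suc n) + (?c' + 2 * ?a') * \<sigma> (Suc (Suc n)))
      = - 2 * \<sigma> (Suc n) * (?a * ?c' + ?a' * (?b + 2 * ?a))"
    by algebra
  have "0 < ?a * ?c' + ?a' * (?b + 2 * ?a)"
    using a_pos c_pos[of "Suc (Suc n)"] n by (simp add: add_pos_nonneg)
  with growth nonzero b_pos[OF n']
  have "?c' * \<sigma> (Suc n) + (?c' + 2 * ?a') * \<sigma> (Suc (Suc n)) \<noteq> 0"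
    by auto
  moreover
  \<comment> \<open>\<open>b\<^bsub>i+1\<^esub>\<close> times the product recurrence at \<open>i + 1\<close>, with \<open>b\<^bsub>i+1\<^esub> \<sigma>\<^bsub>i+2\<^esub>\<close> and
    \<open>b\<^bsub>i+1\<^esub> \<rho>\<^bsub>i+2\<^esub>\<close> eliminated by the other two recurrences\<close>
  from pseudo_cosine_rec_Suc[OF \<sigma> n, unfolded k'] pseudo_cosine_rec_Suc[OF \<rho> n, unfolded plateau]
    pseudo_cosine_rec_Suc[OF \<tau> n, unfolded plateau]
  have "(?c' + ?a' + ?b' - t) * (?c' * \<sigma> (Suc n) + (?c' + 2 * ?a') * \<sigma> (Suc (Suc n)))
      * \<rho> (Suc n) = 0"
    by algebra
  moreover have "\<rho> (Suc n) \<noteq> 0"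
    using pseudo_cosine_no_consecutive_zeros[OF \<rho> n'] plateau by auto
  ultimately show ?thesis using k' by simp
qed

lemma tight_pair_minus_valency:
  assumes a1: "a 1 = 0" and ai: "\<exists>i. 2 \<le> i \<and> i \<le> D - 2 \<and> a i \<noteq> 0"
    and tight: "tight_pair a b c D (- real (b 0)) t"
  shows "t = real (b 0)"
proof -
  obtain \<sigma> \<rho> \<eta> where \<sigma>: "pseudo_cosine a b c D (- real (b 0)) \<sigma>"
    and \<rho>: "pseudo_cosine a b c D t \<rho>" and \<tau>: "pseudo_cosine a b c D \<eta> (\<lambda>i. \<sigma> i * \<rho> i)"
    using tight unfolding tight_pair_def tight_seqs_def by blast
  obtain i1 where i1: "2 \<le> i1" "i1 \<le> D - 2" "a i1 \<noteq> 0" using ai by blast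
  then obtain i where "i \<le> i1" and below: "\<forall>j<i. \<not> (0 < j \<and> a j \<noteq> 0)"
    and i: "0 < i" "a i \<noteq> 0"
    using ex_least_nat_le[of "\<lambda>j. 0 < j \<and> a j \<noteq> 0" i1] by auto
  moreover have "i \<noteq> 1" using a1 i by auto
  ultimately obtain n where n: "i = Suc n" "0 < n" by (cases i) auto
  have D: "Suc (Suc n) < D" using n \<open>i \<le> i1\<close> i1 by linarith
  have alt: "\<sigma> j = (-1) ^ j" if "j \<le> i" for j
    using minus_valency_cosine_alternating[OF \<sigma>, of i j] below D n that by auto
  have "\<eta> = - t"
    using pseudo_cosine_1[OF \<tau>] pseudo_cosine_1[OF \<rho>] alt[of 1] n D by simp
  with \<tau> have \<tau>': "pseudo_cosine a b c D (- t) (\<lambda>i. \<sigma> i * \<rho> i)" by simp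
  have "\<sigma> n = - \<sigma> (Suc n)" "\<sigma> (Suc n) \<noteq> 0" using alt n by simp_all
  with minus_valency_partner_eq_valency[OF \<sigma> \<rho> \<tau>' D] i n show ?thesis by simp
qed

lemma tight_pair_eq_valency:
  assumes a1: "a 1 = 0" and ai: "\<exists>i. 2 \<le> i \<and> i \<le> D - 2 \<and> a i \<noteq> 0"
    and tight: "tight_pair a b c D \<theta> \<theta>'"
  shows "\<theta> = real (b 0) \<or> \<theta>' = real (b 0)"
proof -
  obtain \<sigma> \<rho> \<eta> where \<sigma>: "pseudo_cosine a b c D \<theta> \<sigma>"
    and \<rho>: "pseudo_cosine a b c D \<theta>' \<rho>" and \<tau>: "pseudo_cosine a b c D \<eta> (\<lambda>i. \<sigma> i * \<rho> i)"
    using tight unfolding tight_pair_def tight_seqs_def by blast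
  have D: "1 < D" using ai by auto
  have \<theta>: "\<theta> = real (b 0) * \<sigma> 1" and \<theta>': "\<theta>' = real (b 0) * \<rho> 1"
    using pseudo_cosine_1[OF \<sigma>] pseudo_cosine_1[OF \<rho>] D by simp_all
  from tight_first_cosines[OF a1 D \<sigma> \<rho> \<tau>]
  consider "\<sigma> 1 = 1" | "\<sigma> 1 = -1" | "\<rho> 1 = 1" | "\<rho> 1 = -1"
    by (auto simp: power2_eq_1_iff)
  then show ?thesis
  proof cases
    case 2
    then show ?thesis using tight_pair_minus_valency[OF a1 ai] tight \<theta> by simp
  next
    case 4
    then show ?thesis using tight_pair_minus_valency[OF a1 ai] tight_pair_commute[OF tight] \<theta>'
      by simp
  qed (simp_all add: \<theta> \<theta>')
qed

end

lemma distance_regular_intersection_array: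
  "distance_regular V E a b c \<Longrightarrow> intersection_array a b c (diameter V E)"
  by unfold_locales
    (simp_all add: distance_regular_intersection_sum distance_regular_c_pos distance_regular_b_pos)

theorem theorem10p1:
  fixes V :: "'a set" and E :: "'a \<Rightarrow> 'a \<Rightarrow> bool" and a b c :: "nat \<Rightarrow> nat" and D :: nat
  assumes drg: "distance_regular V E a b c"
    and diam: "D = diameter V E"
    and D4: "D \<ge> 4"
    and a1: "a 1 = 0"
    and ai: "\<exists>i. 2 \<le> i \<and> i \<le> D - 2 \<and> a i \<noteq> 0"
  shows "(\<forall>\<theta>::real. tight_pair a b c D \<theta> (real (b 0))) \<and>
         (\<forall>\<theta> \<theta>' :: real. tight_pair a b c D \<theta> \<theta>' \<longrightarrow> \<theta> = real (b 0) \<or> \<theta>' = real (b 0))"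
proof -
  interpret intersection_array a b c D
    using distance_regular_intersection_array[OF drg] diam by simp
  show ?thesis
    using tight_pair_valency tight_pair_eq_valency[OF a1 ai] by blast
qed

end
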